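(* Let $d=4$ and consider the channel $\mathcal C(\rho)=\sum_{k=1}^4\langle k|\rho|k\rangle\,\gamma_k$ with $\gamma_1=|1\rangle\langle1|$, $\gamma_2=\tfrac13|2\rangle\langle2|+\tfrac23|1\rangle\langle1|$, $\gamma_3=\tfrac23|2\rangle\langle2|+\tfrac13|1\rangle\langle1|$, $\gamma_4=|2\rangle\langle2|$. Then $\mathcal C$ maps every passive state to a passive state, and for $\rho=\tfrac13(|1\rangle\langle1|+|3\rangle\langle3|+|4\rangle\langle4|)$ one has $\mathsf{Erg}(\rho)=(E_4-E_2)/3$ and $\mathsf{Erg}(\mathcal C(\rho))=(E_2-E_1)/9$. Consequently, whenever $E_2-E_1>3(E_4-E_2)$, $\mathcal C$ is passivity-preserving but strictly increases the ergotropy of $\rho$.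
   Context: $S$ is a $d$-dimensional quantum system with non-degenerate Hamiltonian $H=\sum_{i=1}^d E_i|i\rangle\langle i|$, $E_1<\dots<E_d$. The ergotropy of a state $\rho$ is $\mathsf{Erg}(\rho)=\mathrm{Tr}[H\rho]-\min_U\mathrm{Tr}[HU\rho U^\dagger]$ (minimum over unitaries). A state is passive if it is of the form $\sum_i p_i|i\rangle\langle i|$ with $p_1\ge\dots\ge p_d$ (equivalently, it has zero ergotropy). *)

theory Defs
  imports "HOL-Analysis.Analysis"
begin

(* Matrices are complex^'n^'n (HOL-Analysis); basis vector |i> of the paper
   (i = 1..d) is index i-1 of the finite index type 'n (for d = 4: type 4,
   elements 0,1,2,3 in increasing order). *)

definition adj :: "complex^'n^'n \<Rightarrow> complex^'n^'n" where
  "adj A = (\<chi> i j. cnj (A $ j $ i))"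

definition unitary_mat :: "complex^'n^'n \<Rightarrow> bool" where
  "unitary_mat U \<longleftrightarrow> U ** adj U = mat 1 \<and> adj U ** U = mat 1"

definition diag_mat :: "('n \<Rightarrow> complex) \<Rightarrow> complex^'n^'n" where
  "diag_mat f = (\<chi> i j. if i = j then f i else 0)"

definition psd :: "complex^'n^'n \<Rightarrow> bool" where
  "psd A \<longleftrightarrow> (\<forall>x::complex^'n. (\<Sum>i\<in>UNIV. cnj (x $ i) * (A *v x) $ i) \<in> \<real> \<and>
                               0 \<le> Re (\<Sum>i\<in>UNIV. cnj (x $ i) * (A *v x) $ i))"

definition is_state :: "complex^'n^'n \<Rightarrow> bool" where
  "is_state \<rho> \<longleftrightarrow> adj \<rho> = \<rho> \<and> psd \<rho> \<and> trace \<rho> = 1"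

definition hamiltonian :: "('n \<Rightarrow> real) \<Rightarrow> complex^'n^'n" where
  "hamiltonian E = diag_mat (\<lambda>i. complex_of_real (E i))"

definition ergotropy :: "('n \<Rightarrow> real) \<Rightarrow> complex^'n^'n \<Rightarrow> real" where
  "ergotropy E \<rho> = Re (trace (hamiltonian E ** \<rho>))
     - (INF U \<in> {U. unitary_mat U}. Re (trace (hamiltonian E ** (U ** \<rho> ** adj U))))"

definition passive_state :: "complex^('n::{finite,linorder})^('n::{finite,linorder}) \<Rightarrow> bool" where
  "passive_state \<rho> \<longleftrightarrow> is_state \<rho> \<and>
     (\<exists>p. \<rho> = diag_mat (\<lambda>i. complex_of_real (p i)) \<and>
                        (\<forall>i j. i \<le> j \<longrightarrow> p j \<le> p i))"

definition gammaW :: "4 \<Rightarrow> real" where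
  "gammaW k = (if k = 0 then 1 else if k = 1 then 2/3 else if k = 2 then 1/3 else 0)"

definition gamma :: "4 \<Rightarrow> complex^4^4" where
  "gamma k = diag_mat (\<lambda>i. if i = 0 then complex_of_real (gammaW k)
                           else if i = 1 then complex_of_real (1 - gammaW k) else 0)"

definition chanC :: "complex^4^4 \<Rightarrow> complex^4^4" where
  "chanC \<rho> = (\<chi> i j. \<Sum>k\<in>UNIV. \<rho> $ k $ k * gamma k $ i $ j)"

definition rho0 :: "complex^4^4" where
  "rho0 = diag_mat (\<lambda>i. if i = 1 then 0 else 1/3)"

end

theory Submission
  imports Defs
begin

text \<open>For a diagonal state with spectrum \<open>r\<close> and a unitary \<open>U\<close>, the energy of
  \<open>U \<rho> U\<^sup>\<dagger>\<close> is \<open>\<Sum>\<^sub>i E\<^sub>i \<Sum>\<^sub>k |U\<^sub>i\<^sub>k|\<^sup>2 r\<^sub>k\<close>, and \<open>|U\<^sub>i\<^sub>k|\<^sup>2\<close> is doubly stochastic.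
  The row and column sums together with the ordering of the energies bound this from
  below by \<open>(E\<^sub>0 + E\<^sub>1 + E\<^sub>2)/3\<close> for \<open>rho0\<close> and by \<open>(5E\<^sub>0 + 4E\<^sub>1)/9\<close> for \<open>chanC rho0\<close>
  (spectrum \<open>(4/9, 5/9, 0, 0)\<close>); a transposition attains each bound. On diagonal states the
  channel acts as \<open>p \<mapsto> (p\<^sub>0 + 2p\<^sub>1/3 + p\<^sub>2/3, p\<^sub>1/3 + 2p\<^sub>2/3 + p\<^sub>3, 0, 0)\<close>,
  which preserves decreasing order.\<close>

abbreviation real_diag :: "('n \<Rightarrow> real) \<Rightarrow> complex^'n^'n" where
  "real_diag p \<equiv> diag_mat (\<lambda>i. complex_of_real (p i))"

definition unistochastic :: "complex^'n^'n \<Rightarrow> 'n \<Rightarrow> 'n \<Rightarrow> real" where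
  "unistochastic U i k = (cmod (U $ i $ k))\<^sup>2"

lemma of_real_unistochastic:
  "complex_of_real (unistochastic U i k) = U $ i $ k * cnj (U $ i $ k)"
  unfolding unistochastic_def by (rule complex_norm_square)

lemma unistochastic_nonneg: "0 \<le> unistochastic U i k"
  by (simp add: unistochastic_def)

lemma unistochastic_row_sum:
  assumes "unitary_mat U" shows "(\<Sum>k\<in>UNIV. unistochastic U i k) = 1"
proof -
  have "(\<Sum>k\<in>UNIV. U $ i $ k * cnj (U $ i $ k)) = (U ** adj U) $ i $ i"
    by (simp add: matrix_matrix_mult_def adj_def)
  also have "\<dots> = 1" using assms by (simp add: unitary_mat_def mat_def)
  finally have "complex_of_real (\<Sum>k\<in>UNIV. unistochastic U i k) = 1"
    by (simp add: of_real_unistochastic)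
  then show ?thesis by (simp only: of_real_eq_1_iff)
qed

lemma unistochastic_col_sum:
  assumes "unitary_mat U" shows "(\<Sum>i\<in>UNIV. unistochastic U i k) = 1"
proof -
  have "(\<Sum>i\<in>UNIV. U $ i $ k * cnj (U $ i $ k)) = (adj U ** U) $ k $ k"
    by (simp add: matrix_matrix_mult_def adj_def mult.commute)
  also have "\<dots> = 1" using assms by (simp add: unitary_mat_def mat_def)
  finally have "complex_of_real (\<Sum>i\<in>UNIV. unistochastic U i k) = 1"
    by (simp add: of_real_unistochastic)
  then show ?thesis by (simp only: of_real_eq_1_iff)
qed

lemma trace_diag_mat_mult:
  "trace (diag_mat e ** M) = (\<Sum>i\<in>UNIV. e i * M $ i $ i)"
  by (simp add: trace_def matrix_matrix_mult_def diag_mat_def if_distrib if_distribR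
      sum.delta cong: if_cong)

lemma energy_real_diag:
  "Re (trace (hamiltonian E ** real_diag r)) = (\<Sum>i\<in>UNIV. E i * r i)"
  unfolding hamiltonian_def trace_diag_mat_mult by (simp add: diag_mat_def)

lemma conj_real_diag_diagonal_entry:
  "(U ** real_diag r ** adj U) $ i $ i
     = complex_of_real (\<Sum>k\<in>UNIV. r k * unistochastic U i k)"
proof -
  have "(U ** real_diag r ** adj U) $ i $ i
      = (\<Sum>k\<in>UNIV. complex_of_real (r k) * (U $ i $ k * cnj (U $ i $ k)))"
    by (simp add: matrix_matrix_mult_def diag_mat_def adj_def if_distrib if_distribR
        sum.delta mult_ac cong: if_cong)
  then show ?thesis by (simp flip: of_real_unistochastic)
qed

lemma energy_conj_real_diag:
  "Re (trace (hamiltonian E ** (U ** real_diag r ** adj U)))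
     = (\<Sum>i\<in>UNIV. E i * (\<Sum>k\<in>UNIV. r k * unistochastic U i k))"
  by (simp add: hamiltonian_def trace_diag_mat_mult conj_real_diag_diagonal_entry)

definition perm_mat :: "('n \<Rightarrow> 'n) \<Rightarrow> complex^'n^'n" where
  "perm_mat s = (\<chi> i j. if j = s i then 1 else 0)"

lemma unitary_perm_mat:
  assumes "bij s" shows "unitary_mat (perm_mat s)"
proof -
  have "(perm_mat s ** adj (perm_mat s)) $ i $ j = (if s i = s j then 1 else 0)" for i j
    by (simp add: perm_mat_def adj_def matrix_matrix_mult_def mult_if_delta if_distrib[of cnj])
  then have left: "perm_mat s ** adj (perm_mat s) = mat 1"
    using bij_is_inj[OF assms] by (simp add: vec_eq_iff mat_def inj_eq)
  have "(adj (perm_mat s) ** perm_mat s) $ i $ j = (if i = j then 1 else 0)" for i j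
  proof -
    let ?delta = "\<lambda>m. if i = m then if j = m then 1 else 0 else 0 :: complex"
    have "(adj (perm_mat s) ** perm_mat s) $ i $ j = (\<Sum>k\<in>UNIV. ?delta (s k))"
      by (simp add: perm_mat_def adj_def matrix_matrix_mult_def mult_if_delta if_distrib[of cnj]
          cong: if_cong)
    also have "\<dots> = (\<Sum>m\<in>UNIV. ?delta m)"
      using assms by (rule sum.reindex_bij_betw)
    finally show ?thesis by simp
  qed
  then have right: "adj (perm_mat s) ** perm_mat s = mat 1"
    by (simp add: vec_eq_iff mat_def)
  from left right show ?thesis by (simp add: unitary_mat_def)
qed

lemma energy_conj_perm_mat:
  "Re (trace (hamiltonian E ** (perm_mat s ** real_diag r ** adj (perm_mat s))))
     = (\<Sum>i\<in>UNIV. E i * r (s i))"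
proof -
  have "unistochastic (perm_mat s) i k = (if k = s i then 1 else 0)" for i k
    by (simp add: unistochastic_def perm_mat_def)
  then show ?thesis
    by (simp add: energy_conj_real_diag if_distrib[of "(*) _"] cong: if_cong)
qed

lemma ergotropy_real_diag_eq:
  assumes lower: "\<And>U. unitary_mat U \<Longrightarrow>
      m \<le> (\<Sum>i\<in>UNIV. E i * (\<Sum>k\<in>UNIV. r k * unistochastic U i k))"
    and "bij s" and attained: "(\<Sum>i\<in>UNIV. E i * r (s i)) = m"
  shows "ergotropy E (real_diag r) = (\<Sum>i\<in>UNIV. E i * r i) - m"
proof -
  have "(INF U \<in> {U. unitary_mat U}. Re (trace (hamiltonian E ** (U ** real_diag r ** adj U)))) = m"
  proof (rule cInf_eq_minimum)
    show "m \<in> (\<lambda>U. Re (trace (hamiltonian E ** (U ** real_diag r ** adj U)))) ` {U. unitary_mat U}"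
      using unitary_perm_mat[OF \<open>bij s\<close>] attained
      by (force simp: energy_conj_perm_mat)
  qed (use lower in \<open>auto simp: energy_conj_real_diag\<close>)
  then show ?thesis by (simp add: ergotropy_def energy_real_diag)
qed

lemma diag_mat_mult_vec_nth: "(diag_mat f *v x) $ i = f i * x $ i"
  by (simp add: matrix_vector_mult_def diag_mat_def if_distrib[of "\<lambda>z. z * _"] cong: if_cong)

lemma is_state_real_diag_iff:
  "is_state (real_diag p) \<longleftrightarrow> (\<forall>i. 0 \<le> p i) \<and> (\<Sum>i\<in>UNIV. p i) = 1"
proof -
  have norm_sq: "cnj z * z = complex_of_real ((cmod z)\<^sup>2)" for z
    by (simp add: complex_norm_square mult.commute del: of_real_power)
  have form: "(\<Sum>i\<in>UNIV. cnj (x $ i) * (real_diag p *v x) $ i)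
      = complex_of_real (\<Sum>i\<in>UNIV. p i * (cmod (x $ i))\<^sup>2)" for x
    by (simp add: diag_mat_mult_vec_nth mult.left_commute norm_sq del: of_real_power)
  have "psd (real_diag p) \<longleftrightarrow> (\<forall>i. 0 \<le> p i)"
  proof
    assume "psd (real_diag p)"
    then have "0 \<le> (\<Sum>j\<in>UNIV. p j * (cmod (axis i 1 $ j))\<^sup>2)" for i
      unfolding psd_def form by (metis Re_complex_of_real)
    then show "\<forall>i. 0 \<le> p i"
      by (simp add: axis_def if_distrib[of cmod] if_distrib[of "\<lambda>x. x\<^sup>2"]
          if_distrib[of "(*) _"] cong: if_cong)
  qed (auto simp: psd_def form intro: sum_nonneg)
  moreover have "adj (real_diag p) = real_diag p"
    by (simp add: adj_def diag_mat_def vec_eq_iff)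
  moreover have "trace (real_diag p) = complex_of_real (\<Sum>i\<in>UNIV. p i)"
    by (simp add: trace_def diag_mat_def)
  ultimately show ?thesis by (simp add: is_state_def del: of_real_sum)
qed

lemma energy_conj_flat_spectrum_ge:
  assumes "unitary_mat U" and top: "\<And>i. E i \<le> M" and "0 \<le> c"
  shows "c * ((\<Sum>i\<in>UNIV. E i) - M)
      \<le> (\<Sum>i\<in>UNIV. E i * (\<Sum>k\<in>UNIV. (if k = j then 0 else c) * unistochastic U i k))"
proof -
  let ?w = "unistochastic U"
  have row: "(\<Sum>k\<in>UNIV. (if k = j then 0 else c) * ?w i k) = c * (1 - ?w i j)" for i
  proof -
    have "(\<Sum>k\<in>UNIV. (if k = j then 0 else c) * ?w i k)
        = (\<Sum>k\<in>UNIV. c * ?w i k - (if k = j then c * ?w i k else 0))"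
      by (rule sum.cong) auto
    also have "\<dots> = c * (1 - ?w i j)"
      by (simp add: sum_subtractf sum_distrib_left[symmetric] unistochastic_row_sum[OF \<open>unitary_mat U\<close>]
          algebra_simps)
    finally show ?thesis .
  qed
  have "(\<Sum>i\<in>UNIV. E i * ?w i j) \<le> (\<Sum>i\<in>UNIV. M * ?w i j)"
    by (intro sum_mono mult_right_mono top unistochastic_nonneg)
  also have "\<dots> = M"
    by (simp add: sum_distrib_left[symmetric] unistochastic_col_sum[OF \<open>unitary_mat U\<close>])
  finally have "c * ((\<Sum>i\<in>UNIV. E i) - M) \<le> c * ((\<Sum>i\<in>UNIV. E i) - (\<Sum>i\<in>UNIV. E i * ?w i j))"
    using \<open>0 \<le> c\<close> by (simp add: mult_left_mono)
  also have "\<dots> = (\<Sum>i\<in>UNIV. E i * (c * (1 - ?w i j)))"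
    by (simp add: sum_subtractf sum_distrib_left algebra_simps)
  finally show ?thesis by (simp only: row)
qed

lemma less_4: "(0::4) < 1" "(1::4) < 2" "(2::4) < 3" "(0::4) < 2" "(0::4) < 3" "(1::4) < 3"
  by (simp_all add: less_bit0_def bit0.Rep_numeral bit0.Rep_0 bit0.Rep_1)

lemma UNIV_4_eq: "(UNIV :: 4 set) = {0, 1, 2, 3}"
proof -
  have "(4::4) = 0" by simp
  then show ?thesis using UNIV_4 by auto
qed

lemma sum_UNIV_4: "sum f (UNIV :: 4 set) = f 0 + f 1 + f 2 + f 3"
proof -
  have "(4::4) = 0" by simp
  then show ?thesis using sum_4[of f] by (simp only: ac_simps)
qed

lemma antimono_4_iff:
  fixes p :: "4 \<Rightarrow> 'a::preorder"
  shows "(\<forall>i j :: 4. i \<le> j \<longrightarrow> p j \<le> p i) \<longleftrightarrow> p 1 \<le> p 0 \<and> p 2 \<le> p 1 \<and> p 3 \<le> p 2"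
proof (intro iffI allI impI)
  fix i j :: 4
  assume "p 1 \<le> p 0 \<and> p 2 \<le> p 1 \<and> p 3 \<le> p 2" and "i \<le> j"
  moreover have "i \<in> {0,1,2,3}" "j \<in> {0,1,2,3}" by (simp_all add: UNIV_4_eq[symmetric])
  ultimately show "p j \<le> p i"
    using less_4 by (auto dest: leD intro: order_trans)
qed (use less_4 in auto)

lemma chanC_real_diag:
  "chanC (real_diag p) = real_diag (\<lambda>i. if i = 0 then p 0 + 2/3 * p 1 + 1/3 * p 2
      else if i = 1 then 1/3 * p 1 + 2/3 * p 2 + p 3 else 0)"
  by (simp add: chanC_def gamma_def gammaW_def diag_mat_def vec_eq_iff sum_UNIV_4)

lemma passive_state_chanC:
  assumes "passive_state \<rho>" shows "passive_state (chanC \<rho>)"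
proof -
  obtain p where \<rho>: "\<rho> = real_diag p" and nonneg: "\<And>i. 0 \<le> p i"
    and total: "(\<Sum>i\<in>UNIV. p i) = 1" and antimono: "\<forall>i j. i \<le> j \<longrightarrow> p j \<le> p i"
    using assms by (auto simp: passive_state_def is_state_real_diag_iff)
  define q :: "4 \<Rightarrow> real" where "q i = (if i = 0 then p 0 + 2/3 * p 1 + 1/3 * p 2
      else if i = 1 then 1/3 * p 1 + 2/3 * p 2 + p 3 else 0)" for i
  have "p 3 \<le> p 2" "p 2 \<le> p 1" "p 1 \<le> p 0"
    using antimono unfolding antimono_4_iff by auto
  with nonneg[of 2] nonneg[of 3] have "\<forall>i j. i \<le> j \<longrightarrow> q j \<le> q i"
    unfolding antimono_4_iff by (simp add: q_def)
  moreover have "\<And>i. 0 \<le> q i"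
    using nonneg[of 0] nonneg[of 1] nonneg[of 2] nonneg[of 3] by (simp add: q_def)
  moreover have "(\<Sum>i\<in>UNIV. q i) = 1"
    using total by (simp add: q_def sum_UNIV_4)
  moreover have "chanC \<rho> = real_diag q"
    by (simp add: \<rho> chanC_real_diag q_def)
  ultimately show ?thesis
    by (auto simp: passive_state_def is_state_real_diag_iff)
qed

lemma rho0_eq: "rho0 = real_diag (\<lambda>i. if i = 1 then 0 else 1/3)"
  by (simp add: rho0_def diag_mat_def vec_eq_iff)

lemma chanC_rho0: "chanC rho0 = real_diag (\<lambda>i. if i = 0 then 4/9 else if i = 1 then 5/9 else 0)"
  unfolding rho0_eq chanC_real_diag
  by (rule arg_cong[where f = "\<lambda>p. real_diag p"]) (simp add: fun_eq_iff)

lemma ergotropy_rho0: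
  fixes E :: "4 \<Rightarrow> real"
  assumes "E 0 \<le> E 3" "E 1 \<le> E 3" "E 2 \<le> E 3"
  shows "ergotropy E rho0 = (E 3 - E 1) / 3"
proof -
  have top: "E i \<le> E 3" for i
    using assms UNIV_4_eq by (metis UNIV_I empty_iff insert_iff order_refl)
  have "ergotropy E rho0 = (\<Sum>i\<in>UNIV. E i * (if i = 1 then 0 else 1/3)) - (E 0 + E 1 + E 2) / 3"
    unfolding rho0_eq
  proof (rule ergotropy_real_diag_eq)
    show "bij (Transposition.transpose (1::4) 3)" by simp
    show "(\<Sum>i\<in>UNIV. E i * (if Transposition.transpose 1 3 i = 1 then 0 else 1 / 3)) = (E 0 + E 1 + E 2) / 3"
      by (simp add: sum_UNIV_4 Transposition.transpose_def)
  next
    fix U :: "complex^4^4"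
    assume "unitary_mat U"
    have "(E 0 + E 1 + E 2) / 3 = 1/3 * ((\<Sum>i\<in>UNIV. E i) - E 3)"
      by (simp add: sum_UNIV_4)
    also have "\<dots> \<le> (\<Sum>i\<in>UNIV. E i * (\<Sum>k\<in>UNIV. (if k = 1 then 0 else 1/3) * unistochastic U i k))"
      using \<open>unitary_mat U\<close> top by (rule energy_conj_flat_spectrum_ge) simp
    finally show "(E 0 + E 1 + E 2) / 3 \<le> \<dots>" .
  qed
  then show ?thesis by (simp add: sum_UNIV_4 field_simps)
qed

lemma energy_conj_chanC_rho0_ge:
  fixes E :: "4 \<Rightarrow> real"
  assumes "unitary_mat U" and "E 0 \<le> E 1" "E 1 \<le> E 2" "E 1 \<le> E 3"
  shows "(5 * E 0 + 4 * E 1) / 9 \<le> (\<Sum>i\<in>UNIV. E i *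
      (\<Sum>k\<in>UNIV. (if k = 0 then 4/9 else if k = 1 then 5/9 else 0) * unistochastic U i k))"
proof -
  define a where "a i = (\<Sum>k\<in>UNIV. (if k = 0 then 4/9 else if k = 1 then 5/9 else 0) * unistochastic U i k)"
    for i
  have w: "0 \<le> unistochastic U i k" for i k by (rule unistochastic_nonneg)
  have row: "unistochastic U i 0 + unistochastic U i 1 + unistochastic U i 2 + unistochastic U i 3 = 1" for i
    using unistochastic_row_sum[OF \<open>unitary_mat U\<close>, of i] by (simp add: sum_UNIV_4)
  have col: "unistochastic U 0 k + unistochastic U 1 k + unistochastic U 2 k + unistochastic U 3 k = 1" for k
    using unistochastic_col_sum[OF \<open>unitary_mat U\<close>, of k] by (simp add: sum_UNIV_4)
  have a: "a i = 4/9 * unistochastic U i 0 + 5/9 * unistochastic U i 1" for i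
    by (simp add: a_def sum_UNIV_4)
  have "a 0 + a 1 + a 2 + a 3 = 1"
    using col[of 0] col[of 1] by (simp add: a)
  moreover have "(\<Sum>i\<in>UNIV. E i * a i) = E 1 * (a 0 + a 1 + a 2 + a 3)
      + (E 2 - E 1) * a 2 + (E 3 - E 1) * a 3 - (E 1 - E 0) * a 0"
    by (simp add: sum_UNIV_4 algebra_simps)
  ultimately have energy: "(\<Sum>i\<in>UNIV. E i * a i)
      = E 1 + (E 2 - E 1) * a 2 + (E 3 - E 1) * a 3 - (E 1 - E 0) * a 0"
    by simp
  have "a 0 \<le> 5/9"
    using row[of 0] w[of 0 0] w[of 0 2] w[of 0 3] by (simp add: a)
  then have "(E 1 - E 0) * a 0 \<le> (E 1 - E 0) * (5/9)"
    using assms(2) by (intro mult_left_mono) auto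
  moreover have "0 \<le> (E 2 - E 1) * a 2" "0 \<le> (E 3 - E 1) * a 3"
    using assms(3,4) w by (simp_all add: a)
  ultimately show ?thesis
    unfolding a_def[symmetric] energy by simp
qed

lemma ergotropy_chanC_rho0:
  fixes E :: "4 \<Rightarrow> real"
  assumes "E 0 \<le> E 1" "E 1 \<le> E 2" "E 1 \<le> E 3"
  shows "ergotropy E (chanC rho0) = (E 1 - E 0) / 9"
proof -
  have "ergotropy E (chanC rho0)
      = (\<Sum>i\<in>UNIV. E i * (if i = 0 then 4/9 else if i = 1 then 5/9 else 0)) - (5 * E 0 + 4 * E 1) / 9"
    unfolding chanC_rho0
    by (rule ergotropy_real_diag_eq[where s = "Transposition.transpose 0 1"],
        erule energy_conj_chanC_rho0_ge[OF _ assms], simp, simp add: sum_UNIV_4 Transposition.transpose_def)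
  then show ?thesis by (simp add: sum_UNIV_4 field_simps)
qed

theorem mainTheorem2:
  fixes E :: "4 \<Rightarrow> real"
  assumes "\<And>i j. i < j \<Longrightarrow> E i < E j"
  shows "(\<forall>\<rho>. passive_state \<rho> \<longrightarrow> passive_state (chanC \<rho>))
       \<and> ergotropy E rho0 = (E 3 - E 1) / 3
       \<and> ergotropy E (chanC rho0) = (E 1 - E 0) / 9
       \<and> (E 1 - E 0 > 3 * (E 3 - E 1) \<longrightarrow>
            ergotropy E (chanC rho0) > ergotropy E rho0)"
proof -
  have "E 0 < E 1" "E 1 < E 2" "E 2 < E 3"
    using assms less_4 by auto
  then have "ergotropy E rho0 = (E 3 - E 1) / 3" "ergotropy E (chanC rho0) = (E 1 - E 0) / 9"
    by (simp_all add: ergotropy_rho0 ergotropy_chanC_rho0)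
  then show ?thesis
    using passive_state_chanC by auto
qed

end
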